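(* Let $(\beta,\gamma)$ be antiferromagnetic, let $I\subset(0,\infty)$ be a closed interval, let $k\geq1$, and let $R_1(\lambda),\dots,R_k(\lambda)$ and $Q_0(\lambda)$ be twice continuously differentiable functions from $I$ to $(\gamma,1/\beta)$. Let $\mathcal{F}$ be the family of functions $Q_m:I\to(\gamma,1/\beta)$ obtained, for all $m\geq0$ and all sequences $a_0,\dots,a_{m-1}\in[k]$, by $$Q_{i+1}(\lambda)=\frac{1+\gamma\lambda R_{a_i}(\lambda)Q_i(\lambda)}{\beta+\lambda R_{a_i}(\lambda)Q_i(\lambda)},\qquad i=0,\dots,m-1.$$ Then there exist bounded intervals $I_1,I_2$ such that for every $\lambda\in I$ and every $Q\in\mathcal{F}$ we have $Q'(\lambda)\in I_1$ and $Q''(\lambda)\in I_2$.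
   Context: A pair $(\beta,\gamma)$ with $\beta,\gamma\geq0$ is antiferromagnetic if $\beta\gamma\in[0,1)$ and at least one is nonzero; when $\beta=0$, $1/\beta=+\infty$. *)

theory Defs
  imports "HOL-Analysis.Analysis"
begin

definition antiferromagnetic :: "real \<Rightarrow> real \<Rightarrow> bool" where
  "antiferromagnetic \<beta> \<gamma> \<longleftrightarrow> \<beta> \<ge> 0 \<and> \<gamma> \<ge> 0 \<and> \<beta> * \<gamma> < 1 \<and> (\<beta> \<noteq> 0 \<or> \<gamma> \<noteq> 0)"

text \<open>Membership in the open interval (gamma, 1/beta), where 1/beta = +infinity if beta = 0.\<close>
definition in_range :: "real \<Rightarrow> real \<Rightarrow> real \<Rightarrow> bool" where
  "in_range \<beta> \<gamma> x \<longleftrightarrow> \<gamma> < x \<and> (\<beta> = 0 \<or> x < 1 / \<beta>)"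

definition C2_on :: "real set \<Rightarrow> (real \<Rightarrow> real) \<Rightarrow> bool" where
  "C2_on I f \<longleftrightarrow> (\<exists>f1 f2. (\<forall>x\<in>I. (f has_real_derivative f1 x) (at x within I)
        \<and> (f1 has_real_derivative f2 x) (at x within I)) \<and> continuous_on I f2)"

inductive_set fam :: "real \<Rightarrow> real \<Rightarrow> nat \<Rightarrow> (nat \<Rightarrow> real \<Rightarrow> real) \<Rightarrow> (real \<Rightarrow> real) \<Rightarrow> (real \<Rightarrow> real) set"
  for \<beta> \<gamma> :: real and k :: nat and R :: "nat \<Rightarrow> real \<Rightarrow> real" and Q0 :: "real \<Rightarrow> real" where
  base: "Q0 \<in> fam \<beta> \<gamma> k R Q0"
| step: "Q \<in> fam \<beta> \<gamma> k R Q0 \<Longrightarrow> a \<in> {1..k} \<Longrightarrow>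
     (\<lambda>l. (1 + \<gamma> * l * R a l * Q l) / (\<beta> + l * R a l * Q l)) \<in> fam \<beta> \<gamma> k R Q0"

end

theory Submission
  imports Defs
begin

(*
  Write f(y) = (1 + gamma y) / (beta + y), so that Q_{i+1} = f(y_i) with y_i = lambda R_{a_i} Q_i.
  Since f is decreasing and Q < 1/beta, every member of the family takes values in one compact
  interval [m, M] inside (0, oo), hence y_i stays in a compact interval [y_lo, y_hi] inside
  (0, oo).  Logarithmic derivatives transform by the elasticity phi(y) = y f'(y) / f(y):
    (log Q_{i+1})'  = phi(y_i) * (1/lambda + (log R)' + (log Q_i)'),
    (log Q_{i+1})'' = phi'(y_i) y_i ((log y_i)')^2 + phi(y_i) * (log y_i)''.
  In the antiferromagnetic regime |phi| < 1 on (0, oo), so |phi| <= c < 1 on [y_lo, y_hi], and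
  both recursions are affine contractions in the bound on the previous member.  Bounds above
  their fixed points are therefore invariant along the family, and Q' = Q (log Q)',
  Q'' = Q ((log Q)'^2 + (log Q)'') are bounded as well.
*)

definition spin_map :: "real \<Rightarrow> real \<Rightarrow> real \<Rightarrow> real" where
  "spin_map \<beta> \<gamma> y = (1 + \<gamma> * y) / (\<beta> + y)"

definition elasticity :: "real \<Rightarrow> real \<Rightarrow> real \<Rightarrow> real" where
  "elasticity \<beta> \<gamma> y = (\<gamma> * \<beta> - 1) * y / ((\<beta> + y) * (1 + \<gamma> * y))"

definition elasticity_deriv :: "real \<Rightarrow> real \<Rightarrow> real \<Rightarrow> real" where
  "elasticity_deriv \<beta> \<gamma> y = (\<gamma> * \<beta> - 1) * (\<beta> - \<gamma> * y\<^sup>2) / ((\<beta> + y)\<^sup>2 * (1 + \<gamma> * y)\<^sup>2)"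

lemma antiferromagneticD:
  assumes "antiferromagnetic \<beta> \<gamma>"
  shows "0 \<le> \<beta>" "0 \<le> \<gamma>" "\<beta> * \<gamma> < 1" "\<beta> \<noteq> 0 \<or> \<gamma> \<noteq> 0"
  using assms unfolding antiferromagnetic_def by auto

lemma in_range_pos: "antiferromagnetic \<beta> \<gamma> \<Longrightarrow> in_range \<beta> \<gamma> q \<Longrightarrow> 0 < q"
  unfolding antiferromagnetic_def in_range_def by linarith

lemma spin_map_denominators_pos:
  fixes \<beta> \<gamma> y :: real
  assumes "0 \<le> \<beta>" "0 \<le> \<gamma>" "0 < y"
  shows "0 < \<beta> + y" "0 < 1 + \<gamma> * y"
proof -
  have "0 \<le> \<gamma> * y"
    using assms by simp
  then show "0 < \<beta> + y" "0 < 1 + \<gamma> * y"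
    using assms by linarith+
qed

lemma spin_map_antimono:
  assumes "0 \<le> \<beta>" "\<beta> * \<gamma> \<le> 1" "0 < y" "y \<le> z"
  shows "spin_map \<beta> \<gamma> z \<le> spin_map \<beta> \<gamma> y"
proof -
  have "(1 + \<gamma> * y) * (\<beta> + z) - (1 + \<gamma> * z) * (\<beta> + y) = (z - y) * (1 - \<beta> * \<gamma>)"
    by (simp add: algebra_simps)
  moreover have "0 \<le> (z - y) * (1 - \<beta> * \<gamma>)"
    using assms by simp
  ultimately have "(1 + \<gamma> * z) * (\<beta> + y) \<le> (1 + \<gamma> * y) * (\<beta> + z)"
    by linarith
  then show ?thesis
    using assms unfolding spin_map_def by (simp add: divide_simps)
qed

lemma spin_map_in_range:
  assumes "antiferromagnetic \<beta> \<gamma>" "0 < y"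
  shows "in_range \<beta> \<gamma> (spin_map \<beta> \<gamma> y)"
proof -
  have \<beta>\<gamma>: "0 \<le> \<beta>" "0 \<le> \<gamma>" "\<beta> * \<gamma> < 1"
    using antiferromagneticD[OF assms(1)] by auto
  have "\<gamma> * (\<beta> + y) < 1 + \<gamma> * y"
    using \<beta>\<gamma> by (simp add: algebra_simps)
  then have "\<gamma> < spin_map \<beta> \<gamma> y"
    using \<beta>\<gamma> assms(2) unfolding spin_map_def by (simp add: field_simps)
  moreover have "spin_map \<beta> \<gamma> y < 1 / \<beta>" if "0 < \<beta>"
  proof -
    have "\<beta> * (\<gamma> * y) < y"
      using \<beta>\<gamma> assms(2) by (simp add: mult.assoc[symmetric])
    then show ?thesis
      using that assms(2) unfolding spin_map_def by (simp add: field_simps)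
  qed
  ultimately show ?thesis
    using \<beta>\<gamma>(1) unfolding in_range_def by force
qed

lemma spin_map_uniform_lower_bound:
  assumes "antiferromagnetic \<beta> \<gamma>" "0 \<le> s"
  shows "\<exists>m>0. \<forall>q y. in_range \<beta> \<gamma> q \<longrightarrow> 0 < y \<longrightarrow> y \<le> s * q \<longrightarrow> m \<le> spin_map \<beta> \<gamma> y"
proof (cases "\<beta> = 0")
  case True
  then have "0 < \<gamma>" "\<beta> = 0"
    using antiferromagneticD[OF assms(1)] by auto
  then show ?thesis
    by (intro exI[of _ \<gamma>]) (auto simp: spin_map_def field_simps)
next
  case False
  then have \<beta>: "0 < \<beta>" "\<beta> * \<gamma> < 1" "0 \<le> \<gamma>"
    using antiferromagneticD[OF assms(1)] by auto
  have "spin_map \<beta> \<gamma> (s / \<beta>) \<le> spin_map \<beta> \<gamma> y"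
    if "in_range \<beta> \<gamma> q" "0 < y" "y \<le> s * q" for q y
  proof -
    have "s * q \<le> s * (1 / \<beta>)"
      using that(1) \<beta> assms(2) unfolding in_range_def by (intro mult_left_mono) auto
    then show ?thesis
      using spin_map_antimono[of \<beta> \<gamma> y "s / \<beta>"] \<beta> that by simp
  qed
  moreover have "0 < spin_map \<beta> \<gamma> (s / \<beta>)"
    using \<beta> assms(2) unfolding spin_map_def by (simp add: add_pos_nonneg)
  ultimately show ?thesis
    by blast
qed

lemma abs_elasticity_less_one:
  assumes "antiferromagnetic \<beta> \<gamma>" "0 < y"
  shows "\<bar>elasticity \<beta> \<gamma> y\<bar> < 1"
proof -
  have \<beta>\<gamma>: "0 \<le> \<beta>" "0 \<le> \<gamma>" "\<beta> * \<gamma> < 1" "\<beta> \<noteq> 0 \<or> \<gamma> \<noteq> 0"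
    using antiferromagneticD[OF assms(1)] by auto
  define P where "P = (\<beta> + y) * (1 + \<gamma> * y)"
  have P: "0 < P"
    unfolding P_def using \<beta>\<gamma> assms(2) by (simp add: add_pos_nonneg)
  have "(1 - \<beta> * \<gamma>) * y < P"
  proof -
    have "0 < \<beta> + 2 * \<beta> * \<gamma> * y + \<gamma> * y\<^sup>2"
      using \<beta>\<gamma> assms(2) by (auto simp: add_pos_nonneg add_nonneg_pos)
    then show ?thesis
      unfolding P_def by (simp add: algebra_simps power2_eq_square)
  qed
  moreover have "\<bar>elasticity \<beta> \<gamma> y\<bar> = (1 - \<beta> * \<gamma>) * y / P"
    using \<beta>\<gamma> assms(2) P
    by (simp add: elasticity_def P_def[symmetric] abs_div abs_mult mult.commute[of \<gamma> \<beta>])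
  ultimately show ?thesis
    using P by simp
qed

lemma spin_map_has_real_derivative:
  assumes "y \<noteq> 0" "\<beta> + y \<noteq> 0" "1 + \<gamma> * y \<noteq> 0"
  shows "(spin_map \<beta> \<gamma> has_real_derivative spin_map \<beta> \<gamma> y * elasticity \<beta> \<gamma> y / y) (at y)"
proof -
  have "(spin_map \<beta> \<gamma> has_real_derivative (\<gamma> * \<beta> - 1) / (\<beta> + y)\<^sup>2) (at y)"
    unfolding spin_map_def[abs_def] using assms
    by (auto intro!: derivative_eq_intros simp: divide_simps power2_eq_square ring_distribs)
  moreover have "spin_map \<beta> \<gamma> y * elasticity \<beta> \<gamma> y / y = (\<gamma> * \<beta> - 1) / (\<beta> + y)\<^sup>2"
    using assms unfolding spin_map_def elasticity_def by (simp add: divide_simps power2_eq_square)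
  ultimately show ?thesis
    by simp
qed

lemma elasticity_has_real_derivative:
  assumes "\<beta> + y \<noteq> 0" "1 + \<gamma> * y \<noteq> 0"
  shows "(elasticity \<beta> \<gamma> has_real_derivative elasticity_deriv \<beta> \<gamma> y) (at y)"
  unfolding elasticity_def[abs_def] elasticity_deriv_def
  apply (rule derivative_eq_intros refl)+
  using assms apply simp
  using assms apply (simp add: divide_simps power2_eq_square)
  apply algebra
  done

lemma elasticity_bounds:
  assumes "antiferromagnetic \<beta> \<gamma>" "0 < ylo"
  shows "\<exists>c D. 0 \<le> c \<and> c < 1 \<and>
           (\<forall>y\<in>{ylo..yhi}. \<bar>elasticity \<beta> \<gamma> y\<bar> \<le> c \<and> \<bar>elasticity_deriv \<beta> \<gamma> y\<bar> \<le> D)"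
proof (cases "ylo \<le> yhi")
  case True
  have \<beta>\<gamma>: "0 \<le> \<beta>" "0 \<le> \<gamma>"
    using antiferromagneticD[OF assms(1)] by auto
  have nonzero: "\<beta> + y \<noteq> 0" "1 + \<gamma> * y \<noteq> 0" if "y \<in> {ylo..yhi}" for y
    using spin_map_denominators_pos[OF \<beta>\<gamma>, of y] that assms(2) by auto
  have "continuous_on {ylo..yhi} (\<lambda>y. \<bar>elasticity \<beta> \<gamma> y\<bar>)"
    unfolding elasticity_def using nonzero by (intro continuous_intros) auto
  then obtain y0 where y0: "y0 \<in> {ylo..yhi}" "\<forall>y\<in>{ylo..yhi}. \<bar>elasticity \<beta> \<gamma> y\<bar> \<le> \<bar>elasticity \<beta> \<gamma> y0\<bar>"
    using continuous_attains_sup[OF compact_Icc] True by (metis atLeastAtMost_iff order.refl ex_in_conv)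
  have "continuous_on {ylo..yhi} (elasticity_deriv \<beta> \<gamma>)"
    unfolding elasticity_deriv_def using nonzero by (intro continuous_intros) auto
  then obtain D where "\<forall>y\<in>{ylo..yhi}. \<bar>elasticity_deriv \<beta> \<gamma> y\<bar> \<le> D"
    using compact_continuous_image[OF _ compact_Icc] compact_imp_bounded bounded_real
    by (metis imageI)
  moreover have "\<bar>elasticity \<beta> \<gamma> y0\<bar> < 1"
    using abs_elasticity_less_one[OF assms(1)] y0(1) assms(2) by simp
  ultimately show ?thesis
    using y0 by (intro exI conjI) auto
qed (auto intro: exI[of _ 0])

definition log_derivs_on :: "real set \<Rightarrow> (real \<Rightarrow> real) \<Rightarrow> (real \<Rightarrow> real) \<Rightarrow> (real \<Rightarrow> real) \<Rightarrow> bool" where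
  "log_derivs_on S Q L L' \<longleftrightarrow> (\<forall>x\<in>S. (Q has_real_derivative Q x * L x) (at x within S)
                                    \<and> (L has_real_derivative L' x) (at x within S))"

lemma log_derivs_on_second_derivative:
  assumes "log_derivs_on S Q L L'" "x \<in> S"
  shows "((\<lambda>x. Q x * L x) has_real_derivative Q x * ((L x)\<^sup>2 + L' x)) (at x within S)"
  using assms unfolding log_derivs_on_def
  by (auto intro!: derivative_eq_intros simp: algebra_simps power2_eq_square)

lemma C2_on_imp_log_derivs_on:
  assumes "C2_on S Q" "\<And>x. x \<in> S \<Longrightarrow> Q x \<noteq> 0"
  shows "\<exists>L L'. log_derivs_on S Q L L' \<and> continuous_on S Q \<and> continuous_on S L \<and> continuous_on S L'"
proof -
  obtain Q1 Q2 where d: "\<forall>x\<in>S. (Q has_real_derivative Q1 x) (at x within S)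
                              \<and> (Q1 has_real_derivative Q2 x) (at x within S)"
    and "continuous_on S Q2"
    using assms(1) unfolding C2_on_def by blast
  have "continuous_on S Q" "continuous_on S Q1"
    using d DERIV_continuous continuous_on_eq_continuous_within by blast+
  moreover have "log_derivs_on S Q (\<lambda>x. Q1 x / Q x) (\<lambda>x. (Q2 x * Q x - (Q1 x)\<^sup>2) / (Q x)\<^sup>2)"
    unfolding log_derivs_on_def using d assms(2)
    by (auto intro!: derivative_eq_intros simp: field_simps power2_eq_square)
  moreover have "continuous_on S (\<lambda>x. Q1 x / Q x)"
    using calculation(1,2) assms(2) by (intro continuous_intros) auto
  moreover have "continuous_on S (\<lambda>x. (Q2 x * Q x - (Q1 x)\<^sup>2) / (Q x)\<^sup>2)"
    using calculation(1,2) \<open>continuous_on S Q2\<close> assms(2) by (intro continuous_intros) auto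
  ultimately show ?thesis
    by blast
qed

lemma log_derivs_on_triple_product:
  assumes "log_derivs_on S R LR LR'" "log_derivs_on S Q L L'" "0 \<notin> S"
  shows "log_derivs_on S (\<lambda>l. l * R l * Q l) (\<lambda>l. 1 / l + LR l + L l) (\<lambda>l. - 1 / l\<^sup>2 + LR' l + L' l)"
  unfolding log_derivs_on_def
proof
  fix x assume x: "x \<in> S"
  then have "x \<noteq> 0"
    using assms(3) by auto
  then show "((\<lambda>l. l * R l * Q l) has_real_derivative x * R x * Q x * (1 / x + LR x + L x)) (at x within S) \<and>
    ((\<lambda>l. 1 / l + LR l + L l) has_real_derivative - 1 / x\<^sup>2 + LR' x + L' x) (at x within S)"
    using assms(1,2) x unfolding log_derivs_on_def
    by (auto intro!: derivative_eq_intros simp: field_simps power2_eq_square)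
qed

lemma log_derivs_on_spin_map:
  assumes "log_derivs_on S y Y Y'" "\<And>x. x \<in> S \<Longrightarrow> 0 < y x" "0 \<le> \<beta>" "0 \<le> \<gamma>"
  shows "log_derivs_on S (\<lambda>l. spin_map \<beta> \<gamma> (y l)) (\<lambda>l. elasticity \<beta> \<gamma> (y l) * Y l)
           (\<lambda>l. elasticity_deriv \<beta> \<gamma> (y l) * y l * (Y l)\<^sup>2 + elasticity \<beta> \<gamma> (y l) * Y' l)"
  unfolding log_derivs_on_def
proof
  fix x assume x: "x \<in> S"
  have nonzero: "y x \<noteq> 0" "\<beta> + y x \<noteq> 0" "1 + \<gamma> * y x \<noteq> 0"
    using spin_map_denominators_pos[OF assms(3,4) assms(2)[OF x]] assms(2)[OF x] by auto
  have dy: "(y has_real_derivative y x * Y x) (at x within S)" and dY: "(Y has_real_derivative Y' x) (at x within S)"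
    using assms(1) x unfolding log_derivs_on_def by auto
  show "((\<lambda>l. spin_map \<beta> \<gamma> (y l)) has_real_derivative spin_map \<beta> \<gamma> (y x) * (elasticity \<beta> \<gamma> (y x) * Y x)) (at x within S) \<and>
    ((\<lambda>l. elasticity \<beta> \<gamma> (y l) * Y l) has_real_derivative
       elasticity_deriv \<beta> \<gamma> (y x) * y x * (Y x)\<^sup>2 + elasticity \<beta> \<gamma> (y x) * Y' x) (at x within S)"
  proof
    show "((\<lambda>l. spin_map \<beta> \<gamma> (y l)) has_real_derivative spin_map \<beta> \<gamma> (y x) * (elasticity \<beta> \<gamma> (y x) * Y x)) (at x within S)"
      using DERIV_chain2[OF spin_map_has_real_derivative[OF nonzero] dy] nonzero(1) by (simp add: field_simps)
    show "((\<lambda>l. elasticity \<beta> \<gamma> (y l) * Y l) has_real_derivative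
       elasticity_deriv \<beta> \<gamma> (y x) * y x * (Y x)\<^sup>2 + elasticity \<beta> \<gamma> (y x) * Y' x) (at x within S)"
      using DERIV_mult[OF DERIV_chain2[OF elasticity_has_real_derivative[OF nonzero(2,3)] dy] dY]
      by (simp add: algebra_simps power2_eq_square)
  qed
qed

lemma finite_family_bounded:
  fixes f :: "'j \<Rightarrow> 'a::topological_space \<Rightarrow> real"
  assumes "finite J" "compact S" "\<And>j. j \<in> J \<Longrightarrow> continuous_on S (f j)"
  shows "\<exists>B. \<forall>j\<in>J. \<forall>x\<in>S. \<bar>f j x\<bar> \<le> B"
proof -
  have "bounded (\<Union>j\<in>J. f j ` S)"
    using assms by (auto intro!: compact_imp_bounded compact_continuous_image)
  then show ?thesis
    unfolding bounded_real by auto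
qed

lemma finite_family_bounded_below_pos:
  fixes f :: "'j \<Rightarrow> 'a::topological_space \<Rightarrow> real"
  assumes "finite J" "compact S" "\<And>j. j \<in> J \<Longrightarrow> continuous_on S (f j)"
    and "\<And>j x. j \<in> J \<Longrightarrow> x \<in> S \<Longrightarrow> 0 < f j x"
  shows "\<exists>e>0. \<forall>j\<in>J. \<forall>x\<in>S. e \<le> f j x"
proof -
  have "\<exists>B. \<forall>j\<in>J. \<forall>x\<in>S. \<bar>1 / f j x\<bar> \<le> B"
    by (intro finite_family_bounded continuous_intros; use assms in force)
  then obtain B where B: "\<forall>j\<in>J. \<forall>x\<in>S. \<bar>1 / f j x\<bar> \<le> B"
    by blast
  have "1 / max B 1 \<le> f j x" if "j \<in> J" "x \<in> S" for j x
  proof -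
    have "1 / f j x \<le> max B 1" "0 < f j x"
      using B that assms(4)[OF that] by force+
    then show ?thesis
      by (simp add: field_simps)
  qed
  then show ?thesis
    by (intro exI[of _ "1 / max B 1"]) auto
qed

lemma C2_family_log_bounds:
  fixes R :: "'j \<Rightarrow> real \<Rightarrow> real"
  assumes "finite J" "compact S" "\<And>j. j \<in> J \<Longrightarrow> C2_on S (R j)"
    and "\<And>j x. j \<in> J \<Longrightarrow> x \<in> S \<Longrightarrow> 0 < R j x"
  obtains LR LR' r1 r2 C1 C2 where "0 < r1" "\<And>j. j \<in> J \<Longrightarrow> log_derivs_on S (R j) (LR j) (LR' j)"
    "\<And>j x. j \<in> J \<Longrightarrow> x \<in> S \<Longrightarrow> r1 \<le> R j x \<and> R j x \<le> r2 \<and> \<bar>LR j x\<bar> \<le> C1 \<and> \<bar>LR' j x\<bar> \<le> C2"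
proof -
  have "\<forall>j\<in>J. \<exists>L L'. log_derivs_on S (R j) L L' \<and> continuous_on S (R j) \<and> continuous_on S L \<and> continuous_on S L'"
    using C2_on_imp_log_derivs_on assms(3,4) by (metis less_irrefl)
  then obtain LR LR' where LR: "\<And>j. j \<in> J \<Longrightarrow> log_derivs_on S (R j) (LR j) (LR' j)
      \<and> continuous_on S (R j) \<and> continuous_on S (LR j) \<and> continuous_on S (LR' j)"
    by metis
  obtain r1 where "0 < r1" "\<forall>j\<in>J. \<forall>x\<in>S. r1 \<le> R j x"
    using finite_family_bounded_below_pos[of J S R] assms LR by blast
  moreover obtain r2 where "\<forall>j\<in>J. \<forall>x\<in>S. \<bar>R j x\<bar> \<le> r2"
    using finite_family_bounded[of J S R] assms LR by blast
  moreover obtain C1 where "\<forall>j\<in>J. \<forall>x\<in>S. \<bar>LR j x\<bar> \<le> C1"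
    using finite_family_bounded[of J S LR] assms LR by blast
  moreover obtain C2 where "\<forall>j\<in>J. \<forall>x\<in>S. \<bar>LR' j x\<bar> \<le> C2"
    using finite_family_bounded[of J S LR'] assms LR by blast
  ultimately show thesis
    using that[of r1 LR LR' r2 C1 C2] LR by (meson abs_le_D1)
qed

lemma C2_on_log_bounds:
  assumes "compact S" "C2_on S Q" "\<And>x. x \<in> S \<Longrightarrow> 0 < Q x"
  obtains L L' r1 r2 C1 C2 where "0 < r1" "log_derivs_on S Q L L'"
    "\<And>x. x \<in> S \<Longrightarrow> r1 \<le> Q x \<and> Q x \<le> r2 \<and> \<bar>L x\<bar> \<le> C1 \<and> \<bar>L' x\<bar> \<le> C2"
proof -
  obtain L L' r1 r2 C1 C2 where "0 < r1" "\<And>u. u \<in> {()} \<Longrightarrow> log_derivs_on S Q (L u) (L' u)"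
    "\<And>u x. u \<in> {()} \<Longrightarrow> x \<in> S \<Longrightarrow> r1 \<le> Q x \<and> Q x \<le> r2 \<and> \<bar>L u x\<bar> \<le> C1 \<and> \<bar>L' u x\<bar> \<le> C2"
    by (rule C2_family_log_bounds[of "{()}" S "\<lambda>_. Q"]) (use assms in blast)+
  then show thesis
    using that[of r1 "L ()" "L' ()" r2 C1 C2] by simp
qed

lemma affine_contraction_invariant_bound:
  fixes c E B :: real
  assumes "c < 1"
  shows "\<exists>K. B \<le> K \<and> E + c * K \<le> K"
proof -
  define K where "K = max B (E / (1 - c))"
  have "E \<le> (1 - c) * K"
    using assms unfolding K_def by (simp add: field_simps max_def)
  moreover have "B \<le> K"
    unfolding K_def by simp
  ultimately show ?thesis
    by (auto simp: algebra_simps)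
qed

definition controlled_on ::
    "real set \<Rightarrow> real \<Rightarrow> real \<Rightarrow> real \<Rightarrow> real \<Rightarrow> real \<Rightarrow> real \<Rightarrow> (real \<Rightarrow> real) \<Rightarrow> bool" where
  "controlled_on S \<beta> \<gamma> m M K1 K2 Q \<longleftrightarrow> (\<exists>L L'. log_derivs_on S Q L L' \<and>
     (\<forall>x\<in>S. in_range \<beta> \<gamma> (Q x) \<and> m \<le> Q x \<and> Q x \<le> M \<and> \<bar>L x\<bar> \<le> K1 \<and> \<bar>L' x\<bar> \<le> K2))"

lemma controlled_on_derivative_bounds:
  assumes "antiferromagnetic \<beta> \<gamma>" "controlled_on S \<beta> \<gamma> m M K1 K2 Q"
  shows "\<exists>Q1 Q2. \<forall>x\<in>S. (Q has_real_derivative Q1 x) (at x within S)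
           \<and> (Q1 has_real_derivative Q2 x) (at x within S)
           \<and> Q1 x \<in> {- (M * K1)..M * K1} \<and> Q2 x \<in> {- (M * (K1\<^sup>2 + K2))..M * (K1\<^sup>2 + K2)}"
proof -
  obtain L L' where L: "log_derivs_on S Q L L'"
    and bounds: "\<And>x. x \<in> S \<Longrightarrow> in_range \<beta> \<gamma> (Q x) \<and> Q x \<le> M \<and> \<bar>L x\<bar> \<le> K1 \<and> \<bar>L' x\<bar> \<le> K2"
    using assms(2) unfolding controlled_on_def by blast
  have "\<bar>Q x * L x\<bar> \<le> M * K1 \<and> \<bar>Q x * ((L x)\<^sup>2 + L' x)\<bar> \<le> M * (K1\<^sup>2 + K2)" if x: "x \<in> S" for x
  proof -
    have Q: "0 < Q x" "Q x \<le> M" and LL': "\<bar>L x\<bar> \<le> K1" "\<bar>L' x\<bar> \<le> K2"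
      using bounds[OF x] in_range_pos[OF assms(1)] by auto
    have "\<bar>(L x)\<^sup>2 + L' x\<bar> \<le> K1\<^sup>2 + K2"
      using abs_triangle_ineq[of "(L x)\<^sup>2" "L' x"] power_mono[OF LL'(1), of 2] LL'(2) by simp
    then show ?thesis
      using Q LL'(1) by (auto simp: abs_mult intro!: mult_mono)
  qed
  then have derivs: "\<forall>x\<in>S. (Q has_real_derivative Q x * L x) (at x within S)
      \<and> ((\<lambda>x. Q x * L x) has_real_derivative Q x * ((L x)\<^sup>2 + L' x)) (at x within S)
      \<and> Q x * L x \<in> {- (M * K1)..M * K1}
      \<and> Q x * ((L x)\<^sup>2 + L' x) \<in> {- (M * (K1\<^sup>2 + K2))..M * (K1\<^sup>2 + K2)}"
    using L log_derivs_on_second_derivative[OF L] unfolding log_derivs_on_def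
    by (auto simp: abs_le_iff minus_le_iff)
  show ?thesis
    by (rule exI[of _ "\<lambda>x. Q x * L x"], rule exI[of _ "\<lambda>x. Q x * ((L x)\<^sup>2 + L' x)"]) (rule derivs)
qed

lemma abs_log_deriv_recursion_le:
  fixes e e' y Y Y' :: real
  assumes "\<bar>e\<bar> \<le> c" "\<bar>e'\<bar> \<le> D" "0 < y" "y \<le> y_max" "\<bar>Y\<bar> \<le> A" "\<bar>Y'\<bar> \<le> A'"
  shows "\<bar>e * Y\<bar> \<le> c * A" "\<bar>e' * y * Y\<^sup>2 + e * Y'\<bar> \<le> D * y_max * A\<^sup>2 + c * A'"
proof -
  show "\<bar>e * Y\<bar> \<le> c * A"
    unfolding abs_mult using assms by (intro mult_mono) auto
  have e'y: "\<bar>e'\<bar> * y \<le> D * y_max"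
    using assms by (intro mult_mono) auto
  have Y_sq: "\<bar>Y\<bar>\<^sup>2 \<le> A\<^sup>2"
    using assms by (intro power_mono) auto
  have "\<bar>e'\<bar> * y * \<bar>Y\<bar>\<^sup>2 \<le> D * y_max * A\<^sup>2"
    using assms order_trans[OF _ e'y, of 0] by (intro mult_mono[OF e'y Y_sq]) auto
  then have "\<bar>e' * y * Y\<^sup>2\<bar> \<le> D * y_max * A\<^sup>2"
    using assms(3) by (simp add: abs_mult)
  moreover have "\<bar>e * Y'\<bar> \<le> c * A'"
    unfolding abs_mult using assms by (intro mult_mono) auto
  ultimately show "\<bar>e' * y * Y\<^sup>2 + e * Y'\<bar> \<le> D * y_max * A\<^sup>2 + c * A'"
    using abs_triangle_ineq[of "e' * y * Y\<^sup>2" "e * Y'"] by linarith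
qed

lemma triple_product_bounds:
  fixes a b x r1 r2 r m M q :: real
  assumes "0 < a" "a \<le> x" "x \<le> b" "0 < r1" "r1 \<le> r" "r \<le> r2" "0 < m" "m \<le> q" "q \<le> M"
  shows "0 < x * r * q" "a * r1 * m \<le> x * r * q" "x * r * q \<le> b * r2 * q" "x * r * q \<le> b * r2 * M"
  using assms by (simp_all, (intro mult_mono; simp)+)

lemma controlled_on_spin_step:
  assumes af: "antiferromagnetic \<beta> \<gamma>" and a: "0 < a" and r1: "0 < r1" and m: "0 < m"
    and R: "log_derivs_on {a..b} R LR LR'"
    and R_bounds: "\<And>x. x \<in> {a..b} \<Longrightarrow> r1 \<le> R x \<and> R x \<le> r2 \<and> \<bar>LR x\<bar> \<le> C1 \<and> \<bar>LR' x\<bar> \<le> C2"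
    and Q: "controlled_on {a..b} \<beta> \<gamma> m M K1 K2 Q"
    and elasticity: "\<And>y. y \<in> {a * r1 * m..b * r2 * M} \<Longrightarrow>
                       \<bar>elasticity \<beta> \<gamma> y\<bar> \<le> c \<and> \<bar>elasticity_deriv \<beta> \<gamma> y\<bar> \<le> D"
    and lower: "\<And>q y. in_range \<beta> \<gamma> q \<Longrightarrow> 0 < y \<Longrightarrow> y \<le> b * r2 * q \<Longrightarrow> m \<le> spin_map \<beta> \<gamma> y"
    and upper: "spin_map \<beta> \<gamma> (a * r1 * m) \<le> M"
    and K1: "c * (1 / a + C1 + K1) \<le> K1"
    and K2: "D * (b * r2 * M) * (1 / a + C1 + K1)\<^sup>2 + c * (1 / a\<^sup>2 + C2 + K2) \<le> K2"
  shows "controlled_on {a..b} \<beta> \<gamma> m M K1 K2 (\<lambda>l. spin_map \<beta> \<gamma> (l * R l * Q l))"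
proof -
  obtain L L' where L: "log_derivs_on {a..b} Q L L'"
    and Q_bounds: "\<And>x. x \<in> {a..b} \<Longrightarrow>
                     in_range \<beta> \<gamma> (Q x) \<and> m \<le> Q x \<and> Q x \<le> M \<and> \<bar>L x\<bar> \<le> K1 \<and> \<bar>L' x\<bar> \<le> K2"
    using Q unfolding controlled_on_def by blast
  define y where "y l = l * R l * Q l" for l
  define Y where "Y l = 1 / l + LR l + L l" for l
  define Y' where "Y' l = - 1 / l\<^sup>2 + LR' l + L' l" for l
  have \<beta>\<gamma>: "0 \<le> \<beta>" "0 \<le> \<gamma>" "\<beta> * \<gamma> < 1"
    using antiferromagneticD[OF af] by auto
  have y_bounds: "0 < y x" "a * r1 * m \<le> y x" "y x \<le> b * r2 * Q x" "y x \<le> b * r2 * M"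
    if x: "x \<in> {a..b}" for x
    using triple_product_bounds[OF a _ _ r1 _ _ m] x R_bounds[OF x] Q_bounds[OF x] unfolding y_def by auto
  note y_pos = y_bounds(1)
  have "log_derivs_on {a..b} y Y Y'"
    unfolding y_def[abs_def] Y_def[abs_def] Y'_def[abs_def]
    using log_derivs_on_triple_product[OF R L] a by auto
  from log_derivs_on_spin_map[OF this y_pos \<beta>\<gamma>(1,2)]
  have "log_derivs_on {a..b} (\<lambda>l. spin_map \<beta> \<gamma> (y l)) (\<lambda>l. elasticity \<beta> \<gamma> (y l) * Y l)
          (\<lambda>l. elasticity_deriv \<beta> \<gamma> (y l) * y l * (Y l)\<^sup>2 + elasticity \<beta> \<gamma> (y l) * Y' l)"
    by blast
  moreover have "in_range \<beta> \<gamma> (spin_map \<beta> \<gamma> (y x)) \<and> m \<le> spin_map \<beta> \<gamma> (y x) \<and> spin_map \<beta> \<gamma> (y x) \<le> M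
      \<and> \<bar>elasticity \<beta> \<gamma> (y x) * Y x\<bar> \<le> K1
      \<and> \<bar>elasticity_deriv \<beta> \<gamma> (y x) * y x * (Y x)\<^sup>2 + elasticity \<beta> \<gamma> (y x) * Y' x\<bar> \<le> K2"
    if x: "x \<in> {a..b}" for x
  proof (intro conjI)
    show "in_range \<beta> \<gamma> (spin_map \<beta> \<gamma> (y x))"
      using spin_map_in_range[OF af y_pos[OF x]] .
    show "m \<le> spin_map \<beta> \<gamma> (y x)"
      using lower Q_bounds[OF x] y_pos[OF x] y_bounds[OF x] by blast
    show "spin_map \<beta> \<gamma> (y x) \<le> M"
      using spin_map_antimono[of \<beta> \<gamma> "a * r1 * m" "y x"] \<beta>\<gamma> y_bounds[OF x] a r1 m upper by simp
    have "\<bar>1 / x\<bar> \<le> 1 / a" "\<bar>- 1 / x\<^sup>2\<bar> \<le> 1 / a\<^sup>2"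
      using x a by (auto simp: frac_le power_mono)
    then have Y: "\<bar>Y x\<bar> \<le> 1 / a + C1 + K1" and Y': "\<bar>Y' x\<bar> \<le> 1 / a\<^sup>2 + C2 + K2"
      using R_bounds[OF x] Q_bounds[OF x] unfolding Y_def Y'_def by (smt (verit))+
    have e: "\<bar>elasticity \<beta> \<gamma> (y x)\<bar> \<le> c" "\<bar>elasticity_deriv \<beta> \<gamma> (y x)\<bar> \<le> D"
      using elasticity y_bounds[OF x] by auto
    from abs_log_deriv_recursion_le[OF e y_pos[OF x] y_bounds(4)[OF x] Y Y']
    show "\<bar>elasticity \<beta> \<gamma> (y x) * Y x\<bar> \<le> K1"
      and "\<bar>elasticity_deriv \<beta> \<gamma> (y x) * y x * (Y x)\<^sup>2 + elasticity \<beta> \<gamma> (y x) * Y' x\<bar> \<le> K2"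
      using K1 K2 by linarith+
  qed
  ultimately show ?thesis
    unfolding controlled_on_def y_def by blast
qed

lemma fam_invariant:
  assumes "P Q0" "\<And>Q j. P Q \<Longrightarrow> j \<in> {1..k} \<Longrightarrow> P (\<lambda>l. spin_map \<beta> \<gamma> (l * R j l * Q l))"
  shows "\<forall>Q\<in>fam \<beta> \<gamma> k R Q0. P Q"
proof
  fix Q assume "Q \<in> fam \<beta> \<gamma> k R Q0"
  then show "P Q"
  proof (induction rule: fam.induct)
    case base
    show ?case
      by (rule assms(1))
  next
    case (step Q j)
    then show ?case
      using assms(2)[of Q j] by (simp add: spin_map_def mult.assoc)
  qed
qed

lemma spin_step_invariant_constants:
  assumes af: "antiferromagnetic \<beta> \<gamma>" and a: "0 < a" and r1: "0 < r1" and r2: "0 \<le> b * r2"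
    and m0: "0 < m0"
  shows "\<exists>m M K1 K2 c D. 0 < m \<and> m \<le> m0 \<and> M0 \<le> M \<and> B1 \<le> K1 \<and> B2 \<le> K2
    \<and> (\<forall>y\<in>{a * r1 * m..b * r2 * M}. \<bar>elasticity \<beta> \<gamma> y\<bar> \<le> c \<and> \<bar>elasticity_deriv \<beta> \<gamma> y\<bar> \<le> D)
    \<and> (\<forall>q y. in_range \<beta> \<gamma> q \<longrightarrow> 0 < y \<longrightarrow> y \<le> b * r2 * q \<longrightarrow> m \<le> spin_map \<beta> \<gamma> y)
    \<and> spin_map \<beta> \<gamma> (a * r1 * m) \<le> M
    \<and> c * (1 / a + C1 + K1) \<le> K1
    \<and> D * (b * r2 * M) * (1 / a + C1 + K1)\<^sup>2 + c * (1 / a\<^sup>2 + C2 + K2) \<le> K2"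
proof -
  obtain m1 where m1: "0 < m1"
    "\<forall>q y. in_range \<beta> \<gamma> q \<longrightarrow> 0 < y \<longrightarrow> y \<le> b * r2 * q \<longrightarrow> m1 \<le> spin_map \<beta> \<gamma> y"
    using spin_map_uniform_lower_bound[OF af r2] by blast
  define m where "m = min m0 m1"
  define M where "M = max M0 (spin_map \<beta> \<gamma> (a * r1 * m))"
  have m: "0 < m" "m \<le> m0"
    unfolding m_def using m0 m1 by simp_all
  have lower: "\<forall>q y. in_range \<beta> \<gamma> q \<longrightarrow> 0 < y \<longrightarrow> y \<le> b * r2 * q \<longrightarrow> m \<le> spin_map \<beta> \<gamma> y"
    using m1(2) unfolding m_def by force
  obtain c D where c: "c < 1" and elasticity: "\<forall>y\<in>{a * r1 * m..b * r2 * M}.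
      \<bar>elasticity \<beta> \<gamma> y\<bar> \<le> c \<and> \<bar>elasticity_deriv \<beta> \<gamma> y\<bar> \<le> D"
    using elasticity_bounds[OF af, of "a * r1 * m" "b * r2 * M"] a r1 m by auto
  obtain K1 where K1: "B1 \<le> K1" "c * (1 / a + C1) + c * K1 \<le> K1"
    using affine_contraction_invariant_bound[OF c] by blast
  obtain K2 where K2: "B2 \<le> K2" "D * (b * r2 * M) * (1 / a + C1 + K1)\<^sup>2 + c * (1 / a\<^sup>2 + C2) + c * K2 \<le> K2"
    using affine_contraction_invariant_bound[OF c] by blast
  have "M0 \<le> M" "spin_map \<beta> \<gamma> (a * r1 * m) \<le> M"
    unfolding M_def by simp_all
  moreover have "c * (1 / a + C1 + K1) \<le> K1"
    "D * (b * r2 * M) * (1 / a + C1 + K1)\<^sup>2 + c * (1 / a\<^sup>2 + C2 + K2) \<le> K2"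
    using K1(2) K2(2) by (simp_all add: distrib_left)
  ultimately show ?thesis
    using m lower elasticity K1(1) K2(1) by blast
qed

lemma fam_uniformly_controlled:
  assumes af: "antiferromagnetic \<beta> \<gamma>" and a: "0 < a" "a \<le> b" and k: "k \<ge> 1"
    and R_C2: "\<And>j. j \<in> {1..k} \<Longrightarrow> C2_on {a..b} (R j)"
    and R_range: "\<And>j x. j \<in> {1..k} \<Longrightarrow> x \<in> {a..b} \<Longrightarrow> in_range \<beta> \<gamma> (R j x)"
    and Q0_C2: "C2_on {a..b} Q0"
    and Q0_range: "\<And>x. x \<in> {a..b} \<Longrightarrow> in_range \<beta> \<gamma> (Q0 x)"
  shows "\<exists>m M K1 K2. \<forall>Q\<in>fam \<beta> \<gamma> k R Q0. controlled_on {a..b} \<beta> \<gamma> m M K1 K2 Q"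
proof -
  obtain LR LR' r1 r2 C1 C2 where r1: "0 < r1"
    and LR: "\<And>j. j \<in> {1..k} \<Longrightarrow> log_derivs_on {a..b} (R j) (LR j) (LR' j)"
    and R_bounds: "\<And>j x. j \<in> {1..k} \<Longrightarrow> x \<in> {a..b} \<Longrightarrow>
                     r1 \<le> R j x \<and> R j x \<le> r2 \<and> \<bar>LR j x\<bar> \<le> C1 \<and> \<bar>LR' j x\<bar> \<le> C2"
    by (rule C2_family_log_bounds[of "{1..k}" "{a..b}" R]) (use R_C2 R_range in_range_pos[OF af] in blast)+
  obtain L0 L0' m0 M0 B1 B2 where m0: "0 < m0" and L0: "log_derivs_on {a..b} Q0 L0 L0'"
    and Q0_bounds: "\<And>x. x \<in> {a..b} \<Longrightarrow> m0 \<le> Q0 x \<and> Q0 x \<le> M0 \<and> \<bar>L0 x\<bar> \<le> B1 \<and> \<bar>L0' x\<bar> \<le> B2"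
    by (rule C2_on_log_bounds[of "{a..b}" Q0]) (use Q0_C2 Q0_range in_range_pos[OF af] in blast)+
  have r2: "0 \<le> b * r2"
    using R_bounds[of 1 a] r1 a k by (auto intro!: mult_nonneg_nonneg)
  obtain m M K1 K2 c D where m: "0 < m" "m \<le> m0" and M: "M0 \<le> M" and K: "B1 \<le> K1" "B2 \<le> K2"
    and elasticity: "\<forall>y\<in>{a * r1 * m..b * r2 * M}.
                       \<bar>elasticity \<beta> \<gamma> y\<bar> \<le> c \<and> \<bar>elasticity_deriv \<beta> \<gamma> y\<bar> \<le> D"
    and lower: "\<forall>q y. in_range \<beta> \<gamma> q \<longrightarrow> 0 < y \<longrightarrow> y \<le> b * r2 * q \<longrightarrow> m \<le> spin_map \<beta> \<gamma> y"
    and step_hyps: "spin_map \<beta> \<gamma> (a * r1 * m) \<le> M" "c * (1 / a + C1 + K1) \<le> K1"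
      "D * (b * r2 * M) * (1 / a + C1 + K1)\<^sup>2 + c * (1 / a\<^sup>2 + C2 + K2) \<le> K2"
    using spin_step_invariant_constants[OF af a(1) r1 r2 m0, of M0 B1 B2 C1 C2] by blast
  have "in_range \<beta> \<gamma> (Q0 x) \<and> m \<le> Q0 x \<and> Q0 x \<le> M \<and> \<bar>L0 x\<bar> \<le> K1 \<and> \<bar>L0' x\<bar> \<le> K2"
    if "x \<in> {a..b}" for x
    using Q0_bounds[OF that] Q0_range[OF that] m(2) M K by auto
  then have "controlled_on {a..b} \<beta> \<gamma> m M K1 K2 Q0"
    unfolding controlled_on_def using L0 by blast
  then have "\<forall>Q\<in>fam \<beta> \<gamma> k R Q0. controlled_on {a..b} \<beta> \<gamma> m M K1 K2 Q"
  proof (rule fam_invariant[where P = "controlled_on {a..b} \<beta> \<gamma> m M K1 K2"])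
    fix Q j assume Q: "controlled_on {a..b} \<beta> \<gamma> m M K1 K2 Q" and j: "j \<in> {1..k}"
    show "controlled_on {a..b} \<beta> \<gamma> m M K1 K2 (\<lambda>l. spin_map \<beta> \<gamma> (l * R j l * Q l))"
      by (rule controlled_on_spin_step[OF af a(1) r1 m(1) LR[OF j] R_bounds[OF j] Q
            elasticity[rule_format] lower[rule_format] step_hyps])
  qed
  then show ?thesis
    by blast
qed

theorem lemma3p13:
  fixes \<beta> \<gamma> a b :: real and k :: nat and R :: "nat \<Rightarrow> real \<Rightarrow> real" and Q0 :: "real \<Rightarrow> real"
  assumes "antiferromagnetic \<beta> \<gamma>"
    and "0 < a" and "a \<le> b"
    and "k \<ge> 1"
    and "\<And>j. j \<in> {1..k} \<Longrightarrow> C2_on {a..b} (R j)"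
    and "\<And>j x. j \<in> {1..k} \<Longrightarrow> x \<in> {a..b} \<Longrightarrow> in_range \<beta> \<gamma> (R j x)"
    and "C2_on {a..b} Q0"
    and "\<And>x. x \<in> {a..b} \<Longrightarrow> in_range \<beta> \<gamma> (Q0 x)"
  shows "\<exists>c1 d1 c2 d2. \<forall>Q\<in>fam \<beta> \<gamma> k R Q0. \<exists>Q1 Q2. \<forall>x\<in>{a..b}.
            (Q has_real_derivative Q1 x) (at x within {a..b})
          \<and> (Q1 has_real_derivative Q2 x) (at x within {a..b})
          \<and> Q1 x \<in> {c1..d1} \<and> Q2 x \<in> {c2..d2}"
proof -
  obtain m M K1 K2 where "\<forall>Q\<in>fam \<beta> \<gamma> k R Q0. controlled_on {a..b} \<beta> \<gamma> m M K1 K2 Q"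
    using fam_uniformly_controlled[of \<beta> \<gamma> a b k R Q0, OF assms] by blast
  then show ?thesis
    using controlled_on_derivative_bounds[OF assms(1)] by blast
qed

end
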